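(* For every $n\ge1$, $x^n\,\hat B_n^-(1/x)=\hat B_n^+(x)$, where $\hat B_n^-(x)=\sum_{\sigma\in\mathcal B_n,\ \sigma(1)<0}x^{\hat d_B(\sigma)}$ and $\hat B_n^+(x)=\sum_{\sigma\in\mathcal B_n,\ \sigma(1)>0}x^{\hat d_B(\sigma)}$.
   Context: $\mathcal B_n$ is the set of signed permutations (bijections $\sigma$ of $\{\pm1,\dots,\pm n\}$ with $\sigma(-i)=-\sigma(i)$), written as words $\sigma(1)\cdots\sigma(n)$ with $\sigma(0)=0$. $\hat d_B(\sigma)$ is the number of $i\in\{0\}\cup[n-1]$ such that either $\sigma(i)<\sigma(i+1)$ and $i$ is even, or $\sigma(i)>\sigma(i+1)$ and $i$ is odd. *)

theory Defs
  imports "HOL-Analysis.Analysis"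
begin

text \<open>Signed permutations of rank n, represented as functions on the integers:
  a bijection of {-n..n} - {0} with sigma(-i) = - sigma(i), extended by sigma(0) = 0
  and the identity outside [-n, n] (so that each signed permutation has a unique
  representative).\<close>
definition signed_perms :: "nat \<Rightarrow> (int \<Rightarrow> int) set" where
  "signed_perms n = {\<sigma>. bij_betw \<sigma> ({-int n..int n} - {0}) ({-int n..int n} - {0})
      \<and> (\<forall>i. \<sigma> (-i) = - \<sigma> i)
      \<and> \<sigma> 0 = 0
      \<and> (\<forall>i. \<bar>i\<bar> > int n \<longrightarrow> \<sigma> i = i)}"

definition dhatB :: "nat \<Rightarrow> (int \<Rightarrow> int) \<Rightarrow> nat" where
  "dhatB n \<sigma> = card {i \<in> {0..<n}.
      (\<sigma> (int i) < \<sigma> (int i + 1) \<and> even i) \<or> (\<sigma> (int i) > \<sigma> (int i + 1) \<and> odd i)}"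

definition Bhat_minus :: "nat \<Rightarrow> real \<Rightarrow> real" where
  "Bhat_minus n x = (\<Sum>\<sigma>\<in>{\<sigma>\<in>signed_perms n. \<sigma> 1 < 0}. x ^ dhatB n \<sigma>)"

definition Bhat_plus :: "nat \<Rightarrow> real \<Rightarrow> real" where
  "Bhat_plus n x = (\<Sum>\<sigma>\<in>{\<sigma>\<in>signed_perms n. \<sigma> 1 > 0}. x ^ dhatB n \<sigma>)"

end

theory Submission
  imports Defs
begin

text \<open>The involution \<sigma> \<mapsto> -\<sigma> (negating every value) preserves \<open>\<B>\<^sub>n\<close>, swaps the sign of
  \<sigma>(1), and, since consecutive values \<sigma>(i), \<sigma>(i+1) with 0 \<le> i < n always differ, turns every
  position counted by \<open>d\<^sub>B\<close> into an uncounted one and vice versa. Hence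
  \<open>d\<^sub>B(-\<sigma>) = n - d\<^sub>B(\<sigma>)\<close>, and the two generating functions are exchanged by
  \<open>x\<^sup>k \<mapsto> x\<^sup>n\<^sup>-\<^sup>k\<close>.\<close>

text \<open>Negation is applied only on [-n, n], so that the result is again the canonical
  representative fixing everything outside.\<close>
definition signed_perm_neg :: "nat \<Rightarrow> (int \<Rightarrow> int) \<Rightarrow> int \<Rightarrow> int" where
  "signed_perm_neg n \<sigma> = (\<lambda>i. if \<bar>i\<bar> \<le> int n then - \<sigma> i else \<sigma> i)"

lemma signed_perm_neg_neg [simp]: "signed_perm_neg n (signed_perm_neg n \<sigma>) = \<sigma>"
  unfolding signed_perm_neg_def by auto

lemma signed_perm_neg_apply_1 [simp]: "n \<ge> 1 \<Longrightarrow> signed_perm_neg n \<sigma> 1 = - \<sigma> 1"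
  unfolding signed_perm_neg_def by simp

lemma signed_perm_neg_in_signed_perms:
  assumes "\<sigma> \<in> signed_perms n"
  shows "signed_perm_neg n \<sigma> \<in> signed_perms n"
proof -
  let ?A = "{-int n..int n} - {0}"
  have bij: "bij_betw \<sigma> ?A ?A" and odd: "\<forall>i. \<sigma> (-i) = - \<sigma> i"
    and zero: "\<sigma> 0 = 0" and fix_outside: "\<forall>i. \<bar>i\<bar> > int n \<longrightarrow> \<sigma> i = i"
    using assms unfolding signed_perms_def by blast+
  have "bij_betw (uminus \<circ> \<sigma>) ?A ?A"
    by (rule bij_betw_trans[OF bij]) (rule bij_betwI[where g = uminus]; auto)
  moreover have "\<And>i. i \<in> ?A \<Longrightarrow> (uminus \<circ> \<sigma>) i = signed_perm_neg n \<sigma> i"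
    unfolding signed_perm_neg_def by auto
  ultimately have "bij_betw (signed_perm_neg n \<sigma>) ?A ?A"
    using bij_betw_cong by blast
  moreover have "\<forall>i. signed_perm_neg n \<sigma> (-i) = - signed_perm_neg n \<sigma> i"
    using odd unfolding signed_perm_neg_def by simp
  moreover have "signed_perm_neg n \<sigma> 0 = 0"
    using zero unfolding signed_perm_neg_def by simp
  moreover have "\<forall>i. \<bar>i\<bar> > int n \<longrightarrow> signed_perm_neg n \<sigma> i = i"
    using fix_outside unfolding signed_perm_neg_def by simp
  ultimately show ?thesis
    unfolding signed_perms_def by blast
qed

lemma signed_perm_adjacent_neq:
  assumes "\<sigma> \<in> signed_perms n" and "i < n"
  shows "\<sigma> (int i) \<noteq> \<sigma> (int i + 1)"
proof -
  let ?A = "{-int n..int n} - {0}"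
  have bij: "bij_betw \<sigma> ?A ?A" and zero: "\<sigma> 0 = 0"
    using assms(1) unfolding signed_perms_def by blast+
  have succ_in: "int i + 1 \<in> ?A"
    using assms(2) by auto
  show ?thesis
  proof (cases "i = 0")
    case True
    have "\<sigma> 1 \<in> ?A"
      using bij_betwE[OF bij] succ_in True by auto
    with True zero show ?thesis by auto
  next
    case False
    then have "int i \<in> ?A"
      using assms(2) by auto
    with succ_in show ?thesis
      using bij_betw_imp_inj_on[OF bij] by (auto dest: inj_onD)
  qed
qed

lemma dhatB_le: "dhatB n \<sigma> \<le> n"
proof -
  have "dhatB n \<sigma> \<le> card {0..<n}"
    unfolding dhatB_def by (rule card_mono) auto
  then show ?thesis
    by simp
qed

lemma dhatB_signed_perm_neg:
  assumes "\<sigma> \<in> signed_perms n"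
  shows "dhatB n (signed_perm_neg n \<sigma>) = n - dhatB n \<sigma>"
proof -
  define counted where "counted \<tau> = {i \<in> {0..<n}.
      (\<tau> (int i) < \<tau> (int i + 1) \<and> even i) \<or> (\<tau> (int i) > \<tau> (int i + 1) \<and> odd i)}"
    for \<tau> :: "int \<Rightarrow> int"
  have "i \<in> counted (signed_perm_neg n \<sigma>) \<longleftrightarrow> i \<in> {0..<n} - counted \<sigma>" for i
  proof (cases "i < n")
    case True
    with signed_perm_adjacent_neq[OF assms True] show ?thesis
      unfolding counted_def signed_perm_neg_def by (cases "\<sigma> (int i) < \<sigma> (int i + 1)") auto
  qed (simp add: counted_def)
  then have "counted (signed_perm_neg n \<sigma>) = {0..<n} - counted \<sigma>"
    by blast
  moreover have "counted \<sigma> \<subseteq> {0..<n}"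
    unfolding counted_def by blast
  ultimately have "card (counted (signed_perm_neg n \<sigma>)) = n - card (counted \<sigma>)"
    by (simp add: card_Diff_subset finite_subset)
  then show ?thesis
    unfolding dhatB_def counted_def .
qed

lemma bij_betw_signed_perm_neg:
  assumes "n \<ge> 1"
  shows "bij_betw (signed_perm_neg n)
           {\<sigma> \<in> signed_perms n. \<sigma> 1 < 0} {\<sigma> \<in> signed_perms n. \<sigma> 1 > 0}"
  by (rule bij_betw_byWitness[where f' = "signed_perm_neg n"])
     (use assms signed_perm_neg_in_signed_perms in auto)

theorem mainTheorem9:
  fixes n :: nat and x :: real
  assumes "n \<ge> 1" and "x \<noteq> 0"
  shows "x ^ n * Bhat_minus n (1 / x) = Bhat_plus n x"
proof -
  let ?M = "{\<sigma> \<in> signed_perms n. \<sigma> 1 < 0}"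
  have "Bhat_plus n x = (\<Sum>\<sigma>\<in>?M. x ^ dhatB n (signed_perm_neg n \<sigma>))"
    unfolding Bhat_plus_def
    by (rule sum.reindex_bij_betw[OF bij_betw_signed_perm_neg[OF assms(1)], symmetric])
  also have "\<dots> = (\<Sum>\<sigma>\<in>?M. x ^ n * (1 / x) ^ dhatB n \<sigma>)"
  proof (rule sum.cong)
    fix \<sigma> assume "\<sigma> \<in> ?M"
    then show "x ^ dhatB n (signed_perm_neg n \<sigma>) = x ^ n * (1 / x) ^ dhatB n \<sigma>"
      using assms(2) dhatB_le[of n \<sigma>]
      by (simp add: dhatB_signed_perm_neg power_diff power_one_over)
  qed simp
  finally show ?thesis
    unfolding Bhat_minus_def by (simp add: sum_distrib_left)
qed

end
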